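(* There exist $n,k\in\mathbb{N}$ with $k\le n$ such that for every 2-coloring of the edges of $B_{n,k}$, there exists an induced monochromatic copy of $B_{4,2}$ in $B_{n,k}$; that is, there is a set $V'$ of vertices of $B_{n,k}$ such that the induced subgraph of $B_{n,k}$ on $V'$ is isomorphic to $B_{4,2}$ and all of its edges receive the same color.
   Context: For $n\in\mathbb{N}$, $[n]=\{1,\dots,n\}$, and for a set $X$, $\binom{X}{k}$ denotes the set of $k$-element subsets of $X$. For $k\le n$, $B_{n,k}$ is the bipartite graph with left vertex set $[n]$, right vertex set $\binom{[n]}{k}$, and edge set $\{(x,X)\in[n]\times\binom{[n]}{k} : x\in X\}$. For a graph $H=(V,E)$ and $V'\subseteq V$, the induced subgraph on $V'$ has vertex set $V'$ and edge set consisting of all edges of $H$ with both endpoints in $V'$. A 2-coloring of the edges is a map from the edge set to a 2-element set of colors. *)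

theory Defs
  imports Main
begin

type_synonym bvert = "nat + nat set"

definition B_verts :: "nat \<Rightarrow> nat \<Rightarrow> bvert set" where
  "B_verts n k = Inl ` {1..n} \<union> Inr ` {X. X \<subseteq> {1..n} \<and> card X = k}"

definition B_edges :: "nat \<Rightarrow> nat \<Rightarrow> bvert set set" where
  "B_edges n k = {{Inl x, Inr X} | x X. x \<in> {1..n} \<and> X \<subseteq> {1..n} \<and> card X = k \<and> x \<in> X}"

definition induced_edges :: "'a set set \<Rightarrow> 'a set \<Rightarrow> 'a set set" where
  "induced_edges E V' = {e \<in> E. e \<subseteq> V'}"

definition graph_iso :: "'a set \<Rightarrow> 'a set set \<Rightarrow> 'b set \<Rightarrow> 'b set set \<Rightarrow> bool" where
  "graph_iso V1 E1 V2 E2 \<longleftrightarrow>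
     (\<exists>f. bij_betw f V1 V2 \<and> (\<forall>u\<in>V1. \<forall>v\<in>V1. {u, v} \<in> E1 \<longleftrightarrow> {f u, f v} \<in> E2))"

end

theory Submission
  imports Defs "HOL-Library.Ramsey"
begin

(* Colour each 3-subset Y of [N] by the pattern (p0, p1, p2) of colours of the edges joining
   the smallest, middle and largest element of Y to the right vertex Y. By Ramsey's theorem,
   for N large enough there are h 0 < h 1 < ... < h 8 in [N] all of whose triples have the same
   pattern, and two of p0, p1, p2 agree. Take h 1, h 3, h 5, h 7 as the left vertices of B_{4,2}
   and, for each pair of them, the triple completed by an element at an even position, placed
   (last if p0 = p1, first if p1 = p2, in between if p0 = p2) so that the pair occupies the two
   ranks of equal colour. Since the added element is never one of the four left vertices, the
   ten chosen vertices induce a monochromatic copy of B_{4,2} in B_{N,3}. *)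

lemma graph_iso_sym:
  assumes "graph_iso V1 E1 V2 E2"
  shows "graph_iso V2 E2 V1 E1"
proof -
  obtain f where f: "bij_betw f V1 V2"
    and edges: "\<forall>u\<in>V1. \<forall>v\<in>V1. {u, v} \<in> E1 \<longleftrightarrow> {f u, f v} \<in> E2"
    using assms unfolding graph_iso_def by blast
  let ?g = "inv_into V1 f"
  have g: "bij_betw ?g V2 V1" using f by (rule bij_betw_inv_into)
  have "{u, v} \<in> E2 \<longleftrightarrow> {?g u, ?g v} \<in> E1" if "u \<in> V2" "v \<in> V2" for u v
  proof -
    have "?g u \<in> V1" "?g v \<in> V1" using g that by (auto dest: bij_betw_apply)
    moreover have "f (?g u) = u" "f (?g v) = v" using f that by (auto simp: bij_betw_inv_into_right)
    ultimately show ?thesis using edges by simp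
  qed
  then show ?thesis unfolding graph_iso_def using g by blast
qed

lemma graph_iso_induced_image:
  assumes "inj_on g V" and "\<And>u v. u \<in> V \<Longrightarrow> v \<in> V \<Longrightarrow> {u, v} \<in> E \<longleftrightarrow> {g u, g v} \<in> F"
  shows "graph_iso (g ` V) (induced_edges F (g ` V)) V E"
proof (rule graph_iso_sym)
  have "{g u, g v} \<in> induced_edges F (g ` V) \<longleftrightarrow> {g u, g v} \<in> F" if "u \<in> V" "v \<in> V" for u v
    using that unfolding induced_edges_def by blast
  with assms(2) have "\<forall>u\<in>V. \<forall>v\<in>V. {u, v} \<in> E \<longleftrightarrow> {g u, g v} \<in> induced_edges F (g ` V)"
    by simp
  moreover have "bij_betw g V (g ` V)" using assms(1) by (rule inj_on_imp_bij_betw)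
  ultimately show "graph_iso V E (g ` V) (induced_edges F (g ` V))"
    unfolding graph_iso_def by blast
qed

lemma induced_edges_image_subset:
  assumes "\<And>u v. u \<in> V \<Longrightarrow> v \<in> V \<Longrightarrow> {g u, g v} \<in> F \<Longrightarrow> {u, v} \<in> E"
    and "\<And>e. e \<in> F \<Longrightarrow> \<exists>x y. e = {x, y}"
  shows "induced_edges F (g ` V) \<subseteq> (`) g ` E"
proof
  fix e assume "e \<in> induced_edges F (g ` V)"
  then have "e \<in> F" and "e \<subseteq> g ` V" unfolding induced_edges_def by auto
  obtain x y where e: "e = {x, y}" using assms(2)[OF \<open>e \<in> F\<close>] by blast
  then have "x \<in> g ` V" "y \<in> g ` V" using \<open>e \<subseteq> g ` V\<close> by auto
  then obtain u v where "u \<in> V" "v \<in> V" "x = g u" "y = g v" by (auto elim!: imageE)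
  with e \<open>e \<in> F\<close> assms(1) have "{u, v} \<in> E" and "e = g ` {u, v}" by simp_all
  then show "e \<in> (`) g ` E" by (rule rev_image_eqI)
qed

lemma inj_on_map_sum_Plus:
  assumes "inj_on f A" and "inj_on g B"
  shows "inj_on (map_sum f g) (A <+> B)"
proof (rule inj_onI)
  fix u v assume "u \<in> A <+> B" "v \<in> A <+> B" "map_sum f g u = map_sum f g v"
  then show "u = v"
    by (cases u; cases v) (auto dest: inj_onD[OF assms(1)] inj_onD[OF assms(2)])
qed

lemma sorted_list_of_set_nth_less:
  "u < v \<Longrightarrow> v < card A \<Longrightarrow> sorted_list_of_set A ! u < sorted_list_of_set A ! v"
  using sorted_wrt_nth_less[OF strict_sorted_list_of_set[of A]] by simp

lemma sorted_list_of_set_nth_mem: "u < card A \<Longrightarrow> sorted_list_of_set A ! u \<in> A"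
  by (metis card.infinite length_sorted_list_of_set not_less_zero nth_mem set_sorted_list_of_set)

lemma bits_of_bool_triple_code:
  fixes i :: nat
  assumes "i = of_bool b0 + 2 * of_bool b1 + 4 * of_bool b2"
  shows "i < 8" "odd i = b0" "odd (i div 2) = b1" "odd (i div 4) = b2"
  using assms by (cases b0; cases b1; cases b2; simp)+

lemma ordered_pair_of_card_2:
  fixes P :: "nat set"
  assumes "card P = 2"
  obtains l m where "P = {l, m}" "l < m"
proof -
  obtain x y where "P = {x, y}" "x \<noteq> y" using assms card_2_iff by metis
  then show ?thesis
    using that[of x y] that[of y x] by (metis insert_commute linorder_neqE_nat)
qed

lemma odd_positions_spread_triple:
  fixes l m t :: nat and h :: "nat \<Rightarrow> 'a"
  assumes "1 \<le> l" "l < m" "even t" "{l, m} \<subseteq> A" "0 \<notin> A"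
    and h: "inj_on h S" "{2 * l - 1, 2 * m - 1, t} \<subseteq> S" "(\<lambda>i. 2 * i - 1) ` A \<subseteq> S"
  shows "card (h ` {2 * l - 1, 2 * m - 1, t}) = 3"
    and "h ` {2 * l - 1, 2 * m - 1, t} \<inter> h ` (\<lambda>i. 2 * i - 1) ` A = h ` (\<lambda>i. 2 * i - 1) ` {l, m}"
proof -
  have t_not_odd: "t \<noteq> 2 * i - 1" if "i \<in> A" for i
    using assms(3,5) that by (cases i) auto
  have "2 * l - 1 \<noteq> 2 * m - 1" using assms(1,2) by simp
  moreover have "t \<noteq> 2 * l - 1" "t \<noteq> 2 * m - 1" using t_not_odd assms(4) by auto
  ultimately have "card {2 * l - 1, 2 * m - 1, t} = 3"
    by (simp add: card_insert_if)
  then show "card (h ` {2 * l - 1, 2 * m - 1, t}) = 3"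
    using card_image[OF inj_on_subset[OF h(1,2)]] by simp
  have "{2 * l - 1, 2 * m - 1, t} \<inter> (\<lambda>i. 2 * i - 1) ` A = (\<lambda>i. 2 * i - 1) ` {l, m}"
    using t_not_odd assms(4) by auto
  with inj_on_image_Int[OF h] show
    "h ` {2 * l - 1, 2 * m - 1, t} \<inter> h ` (\<lambda>i. 2 * i - 1) ` A = h ` (\<lambda>i. 2 * i - 1) ` {l, m}"
    by simp
qed

lemma Inl_Inr_in_B_edges_iff [simp]:
  "{Inl x, Inr X} \<in> B_edges n k \<longleftrightarrow> x \<in> {1..n} \<and> X \<subseteq> {1..n} \<and> card X = k \<and> x \<in> X"
  unfolding B_edges_def by (auto simp: doubleton_eq_iff)

lemma Inl_Inl_notin_B_edges [simp]: "{Inl x, Inl y} \<notin> B_edges n k"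
  unfolding B_edges_def by (auto simp: doubleton_eq_iff)

lemma Inr_Inr_notin_B_edges [simp]: "{Inr X, Inr Y} \<notin> B_edges n k"
  unfolding B_edges_def by (auto simp: doubleton_eq_iff)

lemma B_verts_Plus: "B_verts n k = {1..n} <+> {X. X \<subseteq> {1..n} \<and> card X = k}"
  unfolding B_verts_def Plus_def by (rule refl)

lemma Inl_in_B_verts_iff [simp]: "Inl x \<in> B_verts n k \<longleftrightarrow> x \<in> {1..n}"
  unfolding B_verts_def by auto

lemma Inr_in_B_verts_iff [simp]: "Inr X \<in> B_verts n k \<longleftrightarrow> X \<subseteq> {1..n} \<and> card X = k"
  unfolding B_verts_def by auto

lemma B_embedding:
  fixes a :: "nat \<Rightarrow> nat" and X :: "nat set \<Rightarrow> nat set"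
  assumes a: "inj_on a {1..m}" "a ` {1..m} \<subseteq> {1..n}"
    and X: "\<And>P. P \<subseteq> {1..m} \<Longrightarrow> card P = j \<Longrightarrow>
              X P \<subseteq> {1..n} \<and> card (X P) = k \<and> X P \<inter> a ` {1..m} = a ` P"
  shows "inj_on (map_sum a X) (B_verts m j)"
    and "map_sum a X ` B_verts m j \<subseteq> B_verts n k"
    and "\<And>u v. u \<in> B_verts m j \<Longrightarrow> v \<in> B_verts m j \<Longrightarrow>
           {u, v} \<in> B_edges m j \<longleftrightarrow> {map_sum a X u, map_sum a X v} \<in> B_edges n k"
proof -
  let ?J = "{P. P \<subseteq> {1..m} \<and> card P = j}"
  have "inj_on X ?J"
  proof (rule inj_onI)
    fix P Q assume P: "P \<in> ?J" and Q: "Q \<in> ?J" and "X P = X Q"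
    then have "a ` P = a ` Q" using X[of P] X[of Q] by simp
    then show "P = Q" using inj_on_image_eq_iff[OF a(1)] P Q by simp
  qed
  with a(1) show "inj_on (map_sum a X) (B_verts m j)"
    unfolding B_verts_Plus by (rule inj_on_map_sum_Plus)
  show "map_sum a X ` B_verts m j \<subseteq> B_verts n k"
  proof
    fix w assume "w \<in> map_sum a X ` B_verts m j"
    then obtain u where "u \<in> B_verts m j" and "w = map_sum a X u" by blast
    then show "w \<in> B_verts n k" using a(2) X by (cases u) (auto simp: image_subset_iff)
  qed
  have a_in_X_iff: "a i \<in> X P \<longleftrightarrow> i \<in> P" if "i \<in> {1..m}" "P \<in> ?J" for i P
    using X[of P] inj_on_image_mem_iff[OF a(1) that(1)] that by blast
  have Inl_Inr: "{Inl i, Inr P} \<in> B_edges m j \<longleftrightarrow> {Inl (a i), Inr (X P)} \<in> B_edges n k"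
    if "i \<in> {1..m}" "P \<in> ?J" for i P
  proof -
    have "a i \<in> {1..n}" using a(2) that(1) by blast
    then show ?thesis using that X[of P] a_in_X_iff[OF that] by simp
  qed
  show "{u, v} \<in> B_edges m j \<longleftrightarrow> {map_sum a X u, map_sum a X v} \<in> B_edges n k"
    if "u \<in> B_verts m j" "v \<in> B_verts m j" for u v
    using that Inl_Inr by (cases u; cases v) (simp_all add: insert_commute)
qed

lemma monochromatic_induced_B_copy:
  fixes a :: "nat \<Rightarrow> nat" and X :: "nat set \<Rightarrow> nat set" and c :: "bvert set \<Rightarrow> 'c"
  assumes a: "inj_on a {1..m}" "a ` {1..m} \<subseteq> {1..n}"
    and X: "\<And>P. P \<subseteq> {1..m} \<Longrightarrow> card P = j \<Longrightarrow>
              X P \<subseteq> {1..n} \<and> card (X P) = k \<and> X P \<inter> a ` {1..m} = a ` P"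
    and colour: "\<And>i P. P \<subseteq> {1..m} \<Longrightarrow> card P = j \<Longrightarrow> i \<in> P \<Longrightarrow>
                   c {Inl (a i), Inr (X P)} = col"
  shows "\<exists>V' \<subseteq> B_verts n k.
           graph_iso V' (induced_edges (B_edges n k) V') (B_verts m j) (B_edges m j) \<and>
           (\<exists>col. \<forall>e \<in> induced_edges (B_edges n k) V'. c e = col)"
proof -
  let ?g = "map_sum a X"
  let ?V' = "?g ` B_verts m j"
  have inj: "inj_on ?g (B_verts m j)" using a X by (rule B_embedding)
  have sub: "?V' \<subseteq> B_verts n k" using a X by (rule B_embedding)
  have edges: "{u, v} \<in> B_edges m j \<longleftrightarrow> {?g u, ?g v} \<in> B_edges n k"
    if "u \<in> B_verts m j" "v \<in> B_verts m j" for u v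
    using a X that by (rule B_embedding)
  have iso: "graph_iso ?V' (induced_edges (B_edges n k) ?V') (B_verts m j) (B_edges m j)"
    using inj edges by (rule graph_iso_induced_image)
  have "induced_edges (B_edges n k) ?V' \<subseteq> (`) ?g ` B_edges m j"
  proof (rule induced_edges_image_subset)
    show "{u, v} \<in> B_edges m j"
      if "u \<in> B_verts m j" "v \<in> B_verts m j" "{?g u, ?g v} \<in> B_edges n k" for u v
      using edges[OF that(1,2)] that(3) by (rule iffD2)
    show "\<exists>x y. e = {x, y}" if "e \<in> B_edges n k" for e
      using that unfolding B_edges_def by blast
  qed
  moreover have "c (?g ` e) = col" if e: "e \<in> B_edges m j" for e
  proof -
    obtain i P where "e = {Inl i, Inr P}" "P \<subseteq> {1..m}" "card P = j" "i \<in> P"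
      using e unfolding B_edges_def by blast
    then show ?thesis using colour by simp
  qed
  ultimately have "\<forall>e \<in> induced_edges (B_edges n k) ?V'. c e = col" by blast
  with sub iso show ?thesis by blast
qed

definition triple_pattern_homogeneous ::
    "(bvert set \<Rightarrow> 'c) \<Rightarrow> (nat \<Rightarrow> nat) \<Rightarrow> nat \<Rightarrow> 'c \<Rightarrow> 'c \<Rightarrow> 'c \<Rightarrow> bool" where
  "triple_pattern_homogeneous c h m p0 p1 p2 \<longleftrightarrow>
     (\<forall>u v w. u < v \<longrightarrow> v < w \<longrightarrow> w < m \<longrightarrow>
        c {Inl (h u), Inr (h ` {u, v, w})} = p0 \<and>
        c {Inl (h v), Inr (h ` {u, v, w})} = p1 \<and>
        c {Inl (h w), Inr (h ` {u, v, w})} = p2)"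

lemma sorted_enumeration_triple_pattern_homogeneous:
  fixes H :: "nat set" and c :: "bvert set \<Rightarrow> 'c"
  defines "h \<equiv> \<lambda>u. Suc (sorted_list_of_set H ! u)"
  assumes H: "H \<subseteq> {..<N}" "card H = m"
    and pattern: "\<And>Y. Y \<in> [H]\<^bsup>3\<^esup> \<Longrightarrow>
           c {Inl (Suc (sorted_list_of_set Y ! 0)), Inr (Suc ` Y)} = p0 \<and>
           c {Inl (Suc (sorted_list_of_set Y ! 1)), Inr (Suc ` Y)} = p1 \<and>
           c {Inl (Suc (sorted_list_of_set Y ! 2)), Inr (Suc ` Y)} = p2"
  shows "strict_mono_on {..<m} h" "h ` {..<m} \<subseteq> {1..N}"
    and "triple_pattern_homogeneous c h m p0 p1 p2"
proof -
  let ?s = "sorted_list_of_set H"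
  have s_less: "?s ! u < ?s ! v" if "u < v" "v < m" for u v
    using sorted_list_of_set_nth_less that H(2) by blast
  have s_mem: "?s ! u \<in> H" if "u < m" for u
    using sorted_list_of_set_nth_mem that H(2) by blast
  show "strict_mono_on {..<m} h"
    by (rule strict_mono_onI) (simp add: h_def s_less)
  show "h ` {..<m} \<subseteq> {1..N}"
    using s_mem H(1) by (force simp: h_def)
  have "c {Inl (h u), Inr (h ` {u, v, w})} = p0 \<and>
      c {Inl (h v), Inr (h ` {u, v, w})} = p1 \<and>
      c {Inl (h w), Inr (h ` {u, v, w})} = p2"
    if "u < v" "v < w" "w < m" for u v w
  proof -
    let ?Y = "{?s ! u, ?s ! v, ?s ! w}"
    have ordered: "?s ! u < ?s ! v" "?s ! v < ?s ! w" using that s_less by auto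
    then have "?Y \<in> [H]\<^bsup>3\<^esup>"
      using that s_mem by (auto simp: nsets_def card_insert_if)
    moreover have "sorted_list_of_set ?Y = [?s ! u, ?s ! v, ?s ! w]" using ordered by simp
    moreover have "Suc ` ?Y = h ` {u, v, w}" by (simp add: h_def)
    ultimately show ?thesis using pattern[of ?Y] by (simp add: h_def)
  qed
  then show "triple_pattern_homogeneous c h m p0 p1 p2"
    unfolding triple_pattern_homogeneous_def by blast
qed

lemma ramsey_ordered_triple_colours:
  fixes m :: nat
  shows "\<exists>N. \<forall>c :: bvert set \<Rightarrow> bool. \<exists>h p0 p1 p2.
           strict_mono_on {..<m} h \<and> h ` {..<m} \<subseteq> {1..N} \<and>
           triple_pattern_homogeneous c h m p0 p1 p2"
proof -
  obtain N :: nat where N: "partn_lst {..<N} (replicate 8 m) 3"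
    using ramsey_full by blast
  show ?thesis
  proof (intro exI[of _ N] allI)
    fix c :: "bvert set \<Rightarrow> bool"
    define pattern where "pattern Y j = c {Inl (Suc (sorted_list_of_set Y ! j)), Inr (Suc ` Y)}"
      for Y j
    define f :: "nat set \<Rightarrow> nat" where
      "f Y = of_bool (pattern Y 0) + 2 * of_bool (pattern Y 1) + 4 * of_bool (pattern Y 2)" for Y
    have "f \<in> [{..<N}]\<^bsup>3\<^esup> \<rightarrow> {..<8}" using bits_of_bool_triple_code(1)[OF f_def] by blast
    then obtain i H where H: "H \<in> [{..<N}]\<^bsup>m\<^esup>" and fH: "f ` [H]\<^bsup>3\<^esup> \<subseteq> {i}"
      using partn_lstE[OF N] by (metis length_replicate nth_replicate)
    have "H \<subseteq> {..<N}" "card H = m" using H by (auto simp: nsets_def)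
    moreover have "pattern Y 0 = odd i \<and> pattern Y 1 = odd (i div 2) \<and> pattern Y 2 = odd (i div 4)"
      if "Y \<in> [H]\<^bsup>3\<^esup>" for Y
    proof -
      have "i = f Y" using fH that by blast
      from bits_of_bool_triple_code(2-4)[OF this[unfolded f_def]] show ?thesis by simp
    qed
    ultimately have "strict_mono_on {..<m} (\<lambda>u. Suc (sorted_list_of_set H ! u))"
      "(\<lambda>u. Suc (sorted_list_of_set H ! u)) ` {..<m} \<subseteq> {1..N}"
      "triple_pattern_homogeneous c (\<lambda>u. Suc (sorted_list_of_set H ! u)) m
         (odd i) (odd (i div 2)) (odd (i div 4))"
      unfolding pattern_def by (fact sorted_enumeration_triple_pattern_homogeneous)+
    then show "\<exists>h p0 p1 p2. strict_mono_on {..<m} h \<and> h ` {..<m} \<subseteq> {1..N} \<and>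
        triple_pattern_homogeneous c h m p0 p1 p2"
      by blast
  qed
qed

lemma B42_copy_from_spread_triples:
  fixes h :: "nat \<Rightarrow> nat" and t :: "nat \<Rightarrow> nat \<Rightarrow> nat" and c :: "bvert set \<Rightarrow> 'c"
  assumes h: "strict_mono_on {..<9} h" "h ` {..<9} \<subseteq> {1..n}"
    and t: "\<And>l m. 1 \<le> l \<Longrightarrow> l < m \<Longrightarrow> m \<le> 4 \<Longrightarrow> even (t l m) \<and> t l m < 9"
    and colour: "\<And>l m. 1 \<le> l \<Longrightarrow> l < m \<Longrightarrow> m \<le> 4 \<Longrightarrow>
           c {Inl (h (2 * l - 1)), Inr (h ` {2 * l - 1, 2 * m - 1, t l m})} = col \<and>
           c {Inl (h (2 * m - 1)), Inr (h ` {2 * l - 1, 2 * m - 1, t l m})} = col"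
  shows "\<exists>V' \<subseteq> B_verts n 3.
           graph_iso V' (induced_edges (B_edges n 3) V') (B_verts 4 2) (B_edges 4 2) \<and>
           (\<exists>col. \<forall>e \<in> induced_edges (B_edges n 3) V'. c e = col)"
proof -
  let ?odd = "\<lambda>i::nat. 2 * i - 1"
  define T where "T P = {?odd (Min P), ?odd (Max P), t (Min P) (Max P)}" for P
  have inj_h: "inj_on h {..<9}" using h(1) by (rule strict_mono_on_imp_inj_on)
  have odd_sub: "?odd ` {1..4} \<subseteq> {..<9}" by auto
  have pair: "\<exists>l m. P = {l, m} \<and> 1 \<le> l \<and> l < m \<and> m \<le> 4 \<and> T P = {?odd l, ?odd m, t l m}"
    if P: "P \<subseteq> {1..4}" "card P = 2" for P
  proof -
    obtain l m where "P = {l, m}" "l < m" using P(2) by (rule ordered_pair_of_card_2)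
    with P(1) show ?thesis unfolding T_def by auto
  qed
  show ?thesis
  proof (rule monochromatic_induced_B_copy[where a = "h \<circ> ?odd" and X = "\<lambda>P. h ` T P"])
    have "inj_on ?odd {1..4}" by (rule inj_onI) auto
    moreover have "inj_on h (?odd ` {1..4})" using inj_h odd_sub by (rule inj_on_subset)
    ultimately show "inj_on (h \<circ> ?odd) {1..4}" by (rule comp_inj_on)
    show "(h \<circ> ?odd) ` {1..4} \<subseteq> {1..n}" using h(2) odd_sub by (auto simp: image_comp[symmetric])
  next
    fix P :: "nat set" assume "P \<subseteq> {1..4}" "card P = 2"
    then obtain l m where P: "P = {l, m}" "1 \<le> l" "l < m" "m \<le> 4"
      and T: "T P = {?odd l, ?odd m, t l m}" using pair by blast
    note tlm = t[OF P(2-4)]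
    have T_sub: "T P \<subseteq> {..<9}" using T tlm P by auto
    have "{l, m} \<subseteq> {1..4}" using P by auto
    then have "card (h ` T P) = 3 \<and> h ` T P \<inter> h ` ?odd ` {1..4} = h ` ?odd ` P"
      using odd_positions_spread_triple[OF P(2,3) conjunct1[OF tlm] _ _ inj_h T_sub[unfolded T]
        odd_sub] T P(1) by simp
    moreover have "h ` T P \<subseteq> {1..n}" using T_sub h(2) by blast
    ultimately show "h ` T P \<subseteq> {1..n} \<and> card (h ` T P) = 3 \<and>
        h ` T P \<inter> (h \<circ> ?odd) ` {1..4} = (h \<circ> ?odd) ` P"
      using T P(1) by (simp add: image_comp)
  next
    fix i :: nat and P :: "nat set" assume "P \<subseteq> {1..4}" "card P = 2" "i \<in> P"
    then obtain l m where P: "P = {l, m}" "1 \<le> l" "l < m" "m \<le> 4" "i \<in> {l, m}"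
      and T: "T P = {?odd l, ?odd m, t l m}" using pair by blast
    then show "c {Inl ((h \<circ> ?odd) i), Inr (h ` T P)} = col" using colour[OF P(2-4)] by auto
  qed
qed

lemma B42_copy_from_homogeneous_triples:
  fixes h :: "nat \<Rightarrow> nat" and c :: "bvert set \<Rightarrow> bool"
  assumes h: "strict_mono_on {..<9} h" "h ` {..<9} \<subseteq> {1..n}"
    and "triple_pattern_homogeneous c h 9 p0 p1 p2"
  shows "\<exists>V' \<subseteq> B_verts n 3.
           graph_iso V' (induced_edges (B_edges n 3) V') (B_verts 4 2) (B_edges 4 2) \<and>
           (\<exists>col. \<forall>e \<in> induced_edges (B_edges n 3) V'. c e = col)"
proof -
  note triples = assms(3)[unfolded triple_pattern_homogeneous_def, rule_format]
  consider "p0 = p1" | "p1 = p2" | "p0 = p2" by blast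
  then show ?thesis
  proof cases
    case 1
    have colour: "c {Inl (h (2 * l - 1)), Inr (h ` {2 * l - 1, 2 * m - 1, 8})} = p0 \<and>
          c {Inl (h (2 * m - 1)), Inr (h ` {2 * l - 1, 2 * m - 1, 8})} = p0"
      if "1 \<le> l" "l < m" "m \<le> 4" for l m
      using triples[of "2 * l - 1" "2 * m - 1" 8] that 1 by simp
    show ?thesis
      by (rule B42_copy_from_spread_triples[where c = c and t = "\<lambda>_ _. 8", OF h _ colour]) simp
  next
    case 2
    have colour: "c {Inl (h (2 * l - 1)), Inr (h ` {2 * l - 1, 2 * m - 1, 0})} = p1 \<and>
          c {Inl (h (2 * m - 1)), Inr (h ` {2 * l - 1, 2 * m - 1, 0})} = p1"
      if "1 \<le> l" "l < m" "m \<le> 4" for l m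
    proof -
      have "{2 * l - 1, 2 * m - 1, 0} = {0, 2 * l - 1, 2 * m - 1}" by auto
      then show ?thesis using triples[of 0 "2 * l - 1" "2 * m - 1"] that 2 by simp
    qed
    show ?thesis
      by (rule B42_copy_from_spread_triples[where c = c and t = "\<lambda>_ _. 0", OF h _ colour]) simp
  next
    case 3
    have colour: "c {Inl (h (2 * l - 1)), Inr (h ` {2 * l - 1, 2 * m - 1, 2 * l})} = p0 \<and>
          c {Inl (h (2 * m - 1)), Inr (h ` {2 * l - 1, 2 * m - 1, 2 * l})} = p0"
      if "1 \<le> l" "l < m" "m \<le> 4" for l m
    proof -
      have "{2 * l - 1, 2 * m - 1, 2 * l} = {2 * l - 1, 2 * l, 2 * m - 1}" by auto
      then show ?thesis using triples[of "2 * l - 1" "2 * l" "2 * m - 1"] that 3 by simp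
    qed
    show ?thesis
      by (rule B42_copy_from_spread_triples[where c = c and t = "\<lambda>l _. 2 * l", OF h _ colour]) simp
  qed
qed

theorem mainTheorem3:
  shows "\<exists>n k. k \<le> n \<and>
    (\<forall>c :: bvert set \<Rightarrow> bool.
       \<exists>V' \<subseteq> B_verts n k.
         graph_iso V' (induced_edges (B_edges n k) V') (B_verts 4 2) (B_edges 4 2) \<and>
         (\<exists>col. \<forall>e \<in> induced_edges (B_edges n k) V'. c e = col))"
proof -
  obtain N where N: "\<forall>c :: bvert set \<Rightarrow> bool. \<exists>h p0 p1 p2.
      strict_mono_on {..<9} h \<and> h ` {..<9} \<subseteq> {1..N} \<and>
      triple_pattern_homogeneous c h 9 p0 p1 p2"
    using ramsey_ordered_triple_colours by blast
  show ?thesis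
  proof (rule exI[of _ N], rule exI[of _ 3], intro conjI allI)
    fix c :: "bvert set \<Rightarrow> bool"
    obtain h p0 p1 p2 where h: "strict_mono_on {..<9} h" "h ` {..<9} \<subseteq> {1..N}"
      and "triple_pattern_homogeneous c h 9 p0 p1 p2"
      using N by blast
    then show "\<exists>V' \<subseteq> B_verts N 3.
        graph_iso V' (induced_edges (B_edges N 3) V') (B_verts 4 2) (B_edges 4 2) \<and>
        (\<exists>col. \<forall>e \<in> induced_edges (B_edges N 3) V'. c e = col)"
      by (rule B42_copy_from_homogeneous_triples)
    have "h 0 < h 1" "h 1 < h 2" by (rule strict_mono_onD[OF h(1)]; simp)+
    moreover have "1 \<le> h 0" "h 2 \<le> N" using h(2) by (auto simp: image_subset_iff)
    ultimately show "3 \<le> N" by linarith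
  qed
qed

end
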